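(* Let $\mathbf S=\langle S,+,0,\mathscr F\rangle$ be a semilattice with operators, let $I$ be an arbitrary index set, and let $\chi,\gamma$ and $\zeta_i$ ($i\in I$) be congruences on $\mathbf S$. For $\theta\in\operatorname{Con}\mathbf S$ let $\eta(\theta)$ and $\tau(\theta)$ be the least and greatest congruences with the same $0$-class as $\theta$. If $\eta(\chi)\le\gamma$ and $\bigwedge_{i\in I}\tau(\zeta_i)\le\tau(\gamma)$, then \[ \eta\Big(\eta(\chi)\vee\bigwedge_{i\in I}\tau(\chi\wedge\zeta_i)\Big)\le\gamma. \]
   Context: A semilattice with operators is a join semilattice $(S,+)$ with least element $0$ together with a set $\mathscr F$ of unary maps preserving $+$ and $0$; congruences are equivalence relations compatible with $+$ and all $f\in\mathscr F$, ordered by inclusion. If $J$ is the $0$-class of $\theta$, then $x\,\eta(\theta)\,y$ iff $x+j=y+j$ for some $j\in J$, and $x\,\tau(\theta)\,y$ iff for every $h$ in the monoid generated by $\mathscr F$ (including the identity), $h(x)\in J\Leftrightarrow h(y)\in J$. *)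

theory Defs
  imports Main
begin

text \<open>A semilattice with operators: the join semilattice with least element is the
type 'a (class bounded_semilattice_sup_bot, join = sup, 0 = bot), and F is the set of
operators, each preserving sup and bot.\<close>

definition sl_operators :: "('a::bounded_semilattice_sup_bot \<Rightarrow> 'a) set \<Rightarrow> bool" where
  "sl_operators F \<longleftrightarrow> (\<forall>f\<in>F. (\<forall>x y. f (sup x y) = sup (f x) (f y)) \<and> f bot = bot)"

definition congruence :: "('a::bounded_semilattice_sup_bot \<Rightarrow> 'a) set \<Rightarrow> 'a rel \<Rightarrow> bool" where
  "congruence F \<theta> \<longleftrightarrow> equiv UNIV \<theta>
     \<and> (\<forall>x y u v. (x, y) \<in> \<theta> \<longrightarrow> (u, v) \<in> \<theta> \<longrightarrow> (sup x u, sup y v) \<in> \<theta>)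
     \<and> (\<forall>f\<in>F. \<forall>x y. (x, y) \<in> \<theta> \<longrightarrow> (f x, f y) \<in> \<theta>)"

inductive_set gen_monoid :: "('a \<Rightarrow> 'a) set \<Rightarrow> ('a \<Rightarrow> 'a) set" for F where
  gen_id: "id \<in> gen_monoid F"
| gen_comp: "f \<in> F \<Longrightarrow> h \<in> gen_monoid F \<Longrightarrow> f \<circ> h \<in> gen_monoid F"

definition zero_class :: "'a::bounded_semilattice_sup_bot rel \<Rightarrow> 'a set" where
  "zero_class \<theta> = {x. (x, bot) \<in> \<theta>}"

definition eta :: "'a::bounded_semilattice_sup_bot rel \<Rightarrow> 'a rel" where
  "eta \<theta> = {(x, y). \<exists>j\<in>zero_class \<theta>. sup x j = sup y j}"

definition tau :: "('a::bounded_semilattice_sup_bot \<Rightarrow> 'a) set \<Rightarrow> 'a rel \<Rightarrow> 'a rel" where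
  "tau F \<theta> = {(x, y). \<forall>h\<in>gen_monoid F. (h x \<in> zero_class \<theta> \<longleftrightarrow> h y \<in> zero_class \<theta>)}"

definition con_join :: "('a::bounded_semilattice_sup_bot \<Rightarrow> 'a) set \<Rightarrow> 'a rel \<Rightarrow> 'a rel \<Rightarrow> 'a rel" where
  "con_join F \<alpha> \<beta> = \<Inter>{\<theta>. congruence F \<theta> \<and> \<alpha> \<union> \<beta> \<subseteq> \<theta>}"

end

theory Submission
  imports Defs
begin

text \<open>Write \<open>K\<close>, \<open>L\<close>, \<open>Z\<^sub>i\<close> for the 0-classes of \<open>\<chi>\<close>, \<open>\<gamma>\<close>, \<open>\<zeta>\<^sub>i\<close> and \<open>T\<close> for
\<open>\<Inter>\<^sub>i \<tau>(\<chi> \<and> \<zeta>\<^sub>i)\<close>. As \<open>\<eta>(\<psi>)\<close> depends only on the 0-class of \<open>\<psi>\<close>, it suffices to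
find a congruence above \<open>\<eta>(\<chi>)\<close> and \<open>T\<close> whose 0-class lies in \<open>L\<close>. Let \<open>R\<close> be the least
set containing 0 and closed under joins with elements of \<open>K\<close> and under upward \<open>T\<close>-steps;
the syntactic congruence of the down-set of \<open>R\<close> contains \<open>\<eta>(\<chi>)\<close> and \<open>T\<close>, and its 0-class
lies in that down-set. Finally \<open>R \<subseteq> L\<close>, since all images \<open>h x\<close> of an \<open>x \<in> R\<close> satisfy the
invariant "\<open>h x \<in> L\<close>, and \<open>h x \<in> Z\<^sub>i\<close> implies \<open>h x \<in> K\<close>": under this invariant an
upward \<open>T\<close>-step is a \<open>\<tau>(\<zeta>\<^sub>i)\<close>-step for every \<open>i\<close>, hence a \<open>\<tau>(\<gamma>)\<close>-step.\<close>

lemma gen_monoid_hom: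
  assumes "sl_operators F" "h \<in> gen_monoid F"
  shows "(\<forall>x y. h (sup x y) = sup (h x) (h y)) \<and> h (bot::'a::bounded_semilattice_sup_bot) = bot"
  using assms(2) by induction (use assms(1) in \<open>auto simp: sl_operators_def\<close>)

lemma gen_monoid_sup:
  "sl_operators F \<Longrightarrow> h \<in> gen_monoid F \<Longrightarrow> h (sup x y) = sup (h x) (h y)"
  using gen_monoid_hom by blast

lemma gen_monoid_bot:
  "sl_operators F \<Longrightarrow> h \<in> gen_monoid F \<Longrightarrow> h (bot::'a::bounded_semilattice_sup_bot) = bot"
  using gen_monoid_hom by blast

lemma gen_monoid_mono:
  "sl_operators F \<Longrightarrow> h \<in> gen_monoid F \<Longrightarrow> x \<le> (y::'a::bounded_semilattice_sup_bot) \<Longrightarrow> h x \<le> h y"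
  by (metis gen_monoid_sup sup.absorb_iff2 sup.cobounded1)

lemma gen_monoid_comp:
  "h \<in> gen_monoid F \<Longrightarrow> g \<in> gen_monoid F \<Longrightarrow> h \<circ> g \<in> gen_monoid F"
  by (induction rule: gen_monoid.induct) (auto simp: comp_assoc intro: gen_monoid.intros)

lemma gen_monoid_generator: "f \<in> F \<Longrightarrow> f \<in> gen_monoid F"
  using gen_monoid.gen_comp[OF _ gen_monoid.gen_id, of f F] by simp

lemma congruence_refl: "congruence F \<theta> \<Longrightarrow> (x, x) \<in> \<theta>"
  by (auto simp: congruence_def equiv_def refl_on_def)

lemma congruence_sym: "congruence F \<theta> \<Longrightarrow> (x, y) \<in> \<theta> \<Longrightarrow> (y, x) \<in> \<theta>"
  by (auto simp: congruence_def equiv_def sym_def)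

lemma congruence_trans: "congruence F \<theta> \<Longrightarrow> (x, y) \<in> \<theta> \<Longrightarrow> (y, z) \<in> \<theta> \<Longrightarrow> (x, z) \<in> \<theta>"
  unfolding congruence_def equiv_def trans_def by blast

lemma congruence_sup:
  "congruence F \<theta> \<Longrightarrow> (x, y) \<in> \<theta> \<Longrightarrow> (u, v) \<in> \<theta> \<Longrightarrow> (sup x u, sup y v) \<in> \<theta>"
  unfolding congruence_def by blast

lemma congruence_gen_monoid:
  assumes "congruence F \<theta>" "h \<in> gen_monoid F" "(x, y) \<in> \<theta>"
  shows "(h x, h y) \<in> \<theta>"
  using assms(2,3)
  by (induction arbitrary: x y rule: gen_monoid.induct) (use assms(1) in \<open>auto simp: congruence_def\<close>)

lemma congruence_inter:
  assumes \<alpha>: "congruence F \<alpha>" and \<beta>: "congruence F \<beta>"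
  shows "congruence F (\<alpha> \<inter> \<beta>)"
  unfolding congruence_def equiv_def
proof (intro conjI)
  show "refl_on UNIV (\<alpha> \<inter> \<beta>)"
    using congruence_refl[OF \<alpha>] congruence_refl[OF \<beta>] by (auto simp: refl_on_def)
  show "sym (\<alpha> \<inter> \<beta>)"
    using congruence_sym[OF \<alpha>] congruence_sym[OF \<beta>] by (auto simp: sym_def)
  show "trans (\<alpha> \<inter> \<beta>)"
    using congruence_trans[OF \<alpha>] congruence_trans[OF \<beta>] unfolding trans_def by blast
  show "\<forall>x y u v. (x, y) \<in> \<alpha> \<inter> \<beta> \<longrightarrow> (u, v) \<in> \<alpha> \<inter> \<beta> \<longrightarrow> (sup x u, sup y v) \<in> \<alpha> \<inter> \<beta>"
    using congruence_sup[OF \<alpha>] congruence_sup[OF \<beta>] by blast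
  show "\<forall>f\<in>F. \<forall>x y. (x, y) \<in> \<alpha> \<inter> \<beta> \<longrightarrow> (f x, f y) \<in> \<alpha> \<inter> \<beta>"
    using \<alpha> \<beta> unfolding congruence_def by blast
qed simp

lemma zero_class_sup_iff:
  fixes a b :: "'a::bounded_semilattice_sup_bot"
  assumes \<theta>: "congruence F \<theta>"
  shows "sup a b \<in> zero_class \<theta> \<longleftrightarrow> a \<in> zero_class \<theta> \<and> b \<in> zero_class \<theta>"
proof
  assume "sup a b \<in> zero_class \<theta>"
  then have ab: "(sup a b, bot) \<in> \<theta>" by (simp add: zero_class_def)
  have "(sup a (sup a b), sup a bot) \<in> \<theta>" "(sup b (sup a b), sup b bot) \<in> \<theta>"
    using congruence_sup[OF \<theta> congruence_refl[OF \<theta>] ab] by blast+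
  then have "(sup a b, a) \<in> \<theta>" "(sup a b, b) \<in> \<theta>"
    by (simp_all add: sup.left_commute)
  then show "a \<in> zero_class \<theta> \<and> b \<in> zero_class \<theta>"
    using congruence_trans[OF \<theta> congruence_sym[OF \<theta>] ab] by (simp add: zero_class_def)
next
  assume "a \<in> zero_class \<theta> \<and> b \<in> zero_class \<theta>"
  then show "sup a b \<in> zero_class \<theta>"
    using congruence_sup[OF \<theta>, of a bot b bot] by (simp add: zero_class_def)
qed

lemma zero_class_downward_closed:
  fixes a b :: "'a::bounded_semilattice_sup_bot"
  assumes "congruence F \<theta>" "b \<in> zero_class \<theta>" "a \<le> b"
  shows "a \<in> zero_class \<theta>"
  using zero_class_sup_iff[OF assms(1), of a b] assms(2,3) by (simp add: sup_absorb2)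

lemma zero_class_gen_monoid:
  assumes "sl_operators F" "congruence F \<theta>" "h \<in> gen_monoid F" "x \<in> zero_class \<theta>"
  shows "h x \<in> zero_class \<theta>"
  using congruence_gen_monoid[OF assms(2,3), of x bot] assms gen_monoid_bot[OF assms(1,3)]
  by (simp add: zero_class_def)

lemma zero_class_inter: "zero_class (\<alpha> \<inter> \<beta>) = zero_class \<alpha> \<inter> zero_class \<beta>"
  by (auto simp: zero_class_def)

lemma eta_subset_of_zero_class_subset:
  assumes \<gamma>: "congruence F \<gamma>" and "zero_class \<theta> \<subseteq> zero_class \<gamma>"
  shows "eta \<theta> \<subseteq> \<gamma>"
proof
  fix p assume "p \<in> eta \<theta>"
  then obtain x y j where p: "p = (x, y)" and j: "j \<in> zero_class \<theta>" and e: "sup x j = sup y j"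
    unfolding eta_def by blast
  have "(j, bot) \<in> \<gamma>" using j assms(2) by (auto simp: zero_class_def)
  then have "(sup z j, z) \<in> \<gamma>" for z
    using congruence_sup[OF \<gamma> congruence_refl[OF \<gamma>]] by fastforce
  then show "p \<in> \<gamma>" using p e congruence_trans[OF \<gamma> congruence_sym[OF \<gamma>]] by metis
qed

lemma con_join_least:
  "congruence F \<theta> \<Longrightarrow> \<alpha> \<subseteq> \<theta> \<Longrightarrow> \<beta> \<subseteq> \<theta> \<Longrightarrow> con_join F \<alpha> \<beta> \<subseteq> \<theta>"
  unfolding con_join_def by blast

lemma sym_tau: "sym (tau F \<theta>)"
  by (auto simp: sym_def tau_def)

lemma tau_gen_monoid:
  "(x, y) \<in> tau F \<theta> \<Longrightarrow> g \<in> gen_monoid F \<Longrightarrow> (g x, g y) \<in> tau F \<theta>"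
  using gen_monoid_comp by (fastforce simp: tau_def)

lemma tau_sup:
  assumes "sl_operators F" "congruence F \<theta>" "(x, y) \<in> tau F \<theta>"
  shows "(sup x w, sup y w) \<in> tau F \<theta>"
  using assms(3) by (auto simp: tau_def gen_monoid_sup[OF assms(1)] zero_class_sup_iff[OF assms(2)])

text \<open>The largest congruence of which \<open>D\<close> is a union of classes.\<close>

definition syntactic_con :: "('a::bounded_semilattice_sup_bot \<Rightarrow> 'a) set \<Rightarrow> 'a set \<Rightarrow> 'a rel" where
  "syntactic_con F D = {(x, y). \<forall>g\<in>gen_monoid F. \<forall>z. sup (g x) z \<in> D \<longleftrightarrow> sup (g y) z \<in> D}"

lemma congruence_syntactic_con:
  assumes F: "sl_operators F"
  shows "congruence F (syntactic_con F D)"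
  unfolding congruence_def
proof (intro conjI allI ballI impI)
  show "equiv UNIV (syntactic_con F D)"
    unfolding equiv_def refl_on_def sym_def trans_def syntactic_con_def by auto
next
  fix x y u v
  assume xy: "(x, y) \<in> syntactic_con F D" and uv: "(u, v) \<in> syntactic_con F D"
  show "(sup x u, sup y v) \<in> syntactic_con F D"
    unfolding syntactic_con_def
  proof (clarify)
    fix g z assume g: "g \<in> gen_monoid F"
    note hom = gen_monoid_sup[OF F g]
    have "sup (g (sup x u)) z \<in> D \<longleftrightarrow> sup (g x) (sup (g u) z) \<in> D" by (simp add: hom sup_assoc)
    also have "\<dots> \<longleftrightarrow> sup (g y) (sup (g u) z) \<in> D" using xy g by (simp add: syntactic_con_def)
    also have "\<dots> \<longleftrightarrow> sup (g u) (sup (g y) z) \<in> D" by (simp add: sup_left_commute)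
    also have "\<dots> \<longleftrightarrow> sup (g v) (sup (g y) z) \<in> D" using uv g by (simp add: syntactic_con_def)
    also have "\<dots> \<longleftrightarrow> sup (g (sup y v)) z \<in> D" by (simp add: hom sup_assoc sup_left_commute)
    finally show "sup (g (sup x u)) z \<in> D \<longleftrightarrow> sup (g (sup y v)) z \<in> D" .
  qed
next
  fix f x y assume "f \<in> F" "(x, y) \<in> syntactic_con F D"
  then show "(f x, f y) \<in> syntactic_con F D"
    using gen_monoid_comp[OF _ gen_monoid_generator] by (fastforce simp: syntactic_con_def)
qed

lemma zero_class_syntactic_con:
  assumes "bot \<in> D"
  shows "zero_class (syntactic_con F D) \<subseteq> D"
proof
  fix x assume "x \<in> zero_class (syntactic_con F D)"
  then have "sup (id x) bot \<in> D \<longleftrightarrow> sup (id bot) bot \<in> D"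
    using gen_monoid.gen_id unfolding zero_class_def syntactic_con_def by blast
  then show "x \<in> D" using assms by simp
qed

lemma subset_syntactic_con:
  assumes "sym R"
    and "\<And>a b g z. (a, b) \<in> R \<Longrightarrow> g \<in> gen_monoid F \<Longrightarrow> sup (g a) z \<in> D \<Longrightarrow> sup (g b) z \<in> D"
  shows "R \<subseteq> syntactic_con F D"
  using assms unfolding syntactic_con_def sym_def by blast

inductive_set reachable :: "'a::bounded_semilattice_sup_bot set \<Rightarrow> 'a rel \<Rightarrow> 'a set"
  for K T where
  reachable_bot: "bot \<in> reachable K T"
| reachable_sup: "c \<in> reachable K T \<Longrightarrow> k \<in> K \<Longrightarrow> sup c k \<in> reachable K T"
| reachable_step: "c \<in> reachable K T \<Longrightarrow> (c, d) \<in> T \<Longrightarrow> c \<le> d \<Longrightarrow> d \<in> reachable K T"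

abbreviation below_reachable :: "'a::bounded_semilattice_sup_bot set \<Rightarrow> 'a rel \<Rightarrow> 'a set" where
  "below_reachable K T \<equiv> {x. \<exists>r\<in>reachable K T. x \<le> r}"

lemma eta_subset_syntactic_con:
  assumes F: "sl_operators F" and \<chi>: "congruence F \<chi>"
  shows "eta \<chi> \<subseteq> syntactic_con F (below_reachable (zero_class \<chi>) T)"
proof (rule subset_syntactic_con)
  show "sym (eta \<chi>)" by (auto simp: sym_def eta_def eq_commute)
next
  fix a b g z
  assume ab: "(a, b) \<in> eta \<chi>" and g: "g \<in> gen_monoid F"
    and "sup (g a) z \<in> below_reachable (zero_class \<chi>) T"
  then obtain r j where r: "r \<in> reachable (zero_class \<chi>) T" "sup (g a) z \<le> r"
    and j: "j \<in> zero_class \<chi>" "sup a j = sup b j"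
    by (auto simp: eta_def)
  note hom = gen_monoid_sup[OF F g]
  have "sup (g b) z \<le> sup (sup (g b) (g j)) z" by (simp add: le_supI1)
  also have "\<dots> = sup (sup (g a) z) (g j)"
    using arg_cong[OF j(2), of g] by (simp add: hom sup_commute sup_left_commute)
  also have "\<dots> \<le> sup r (g j)" using r(2) by (simp add: le_supI1)
  finally show "sup (g b) z \<in> below_reachable (zero_class \<chi>) T"
    using reachable_sup[OF r(1) zero_class_gen_monoid[OF F \<chi> g j(1)]] by (intro CollectI bexI)
qed

lemma subset_syntactic_con_reachable:
  assumes "sym T"
    and compatible: "\<And>a b g w. (a, b) \<in> T \<Longrightarrow> g \<in> gen_monoid F \<Longrightarrow> (sup (g a) w, sup (g b) w) \<in> T"
  shows "T \<subseteq> syntactic_con F (below_reachable K T)"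
proof (rule subset_syntactic_con[OF \<open>sym T\<close>])
  fix a b g z
  assume ab: "(a, b) \<in> T" and g: "g \<in> gen_monoid F" and "sup (g a) z \<in> below_reachable K T"
  then obtain r where r: "r \<in> reachable K T" "sup (g a) z \<le> r" by blast
  have "sup (g a) (sup z r) = r" using r(2) by (simp add: sup_assoc[symmetric] sup_absorb2)
  then have "(r, sup (g b) (sup z r)) \<in> T" using compatible[OF ab g, of "sup z r"] by simp
  then have "sup (g b) (sup z r) \<in> reachable K T" using reachable_step[OF r(1)] by (simp add: le_supI2)
  moreover have "sup (g b) z \<le> sup (g b) (sup z r)" by (simp add: le_supI2)
  ultimately show "sup (g b) z \<in> below_reachable K T" by (intro CollectI bexI)
qed

lemma tau_step_invariant:
  assumes F: "sl_operators F" and \<zeta>: "\<forall>i\<in>I. congruence F (\<zeta> i)"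
    and \<tau>: "(\<Inter>i\<in>I. tau F (\<zeta> i)) \<subseteq> tau F \<gamma>"
    and "c \<le> d" and cd: "(c, d) \<in> (\<Inter>i\<in>I. tau F (\<chi> \<inter> \<zeta> i))"
    and c: "\<forall>h\<in>gen_monoid F. h c \<in> zero_class \<gamma> \<and>
              (\<forall>i\<in>I. h c \<in> zero_class (\<zeta> i) \<longrightarrow> h c \<in> zero_class \<chi>)"
  shows "d \<in> zero_class \<gamma> \<and> (\<forall>i\<in>I. d \<in> zero_class (\<zeta> i) \<longrightarrow> d \<in> zero_class \<chi>)"
proof -
  have cd_iff: "h c \<in> zero_class \<chi> \<inter> zero_class (\<zeta> i) \<longleftrightarrow> h d \<in> zero_class \<chi> \<inter> zero_class (\<zeta> i)"
    if "i \<in> I" "h \<in> gen_monoid F" for i h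
    using cd that by (auto simp: tau_def zero_class_inter)
  have down: "h c \<in> zero_class (\<zeta> i)" if "h d \<in> zero_class (\<zeta> i)" "i \<in> I" "h \<in> gen_monoid F" for i h
    using that \<zeta> zero_class_downward_closed gen_monoid_mono[OF F _ \<open>c \<le> d\<close>] by blast
  have "(c, d) \<in> tau F (\<zeta> i)" if "i \<in> I" for i
    unfolding tau_def using c cd_iff down that by blast
  then have "(c, d) \<in> tau F \<gamma>" using \<tau> by blast
  then have "d \<in> zero_class \<gamma>" using c gen_monoid.gen_id by (fastforce simp: tau_def)
  moreover have "d \<in> zero_class \<chi>" if i: "i \<in> I" and d: "d \<in> zero_class (\<zeta> i)" for i
  proof -
    have "c \<in> zero_class (\<zeta> i)" using down[OF _ i gen_monoid.gen_id] d by simp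
    then have "c \<in> zero_class \<chi>" using c i gen_monoid.gen_id by fastforce
    then show ?thesis using cd_iff[OF i gen_monoid.gen_id] \<open>c \<in> zero_class (\<zeta> i)\<close> d by simp
  qed
  ultimately show ?thesis by blast
qed

lemma reachable_subset_zero_class:
  assumes F: "sl_operators F" and \<chi>: "congruence F \<chi>" and \<gamma>: "congruence F \<gamma>"
    and \<zeta>: "\<forall>i\<in>I. congruence F (\<zeta> i)"
    and \<eta>: "eta \<chi> \<subseteq> \<gamma>" and \<tau>: "(\<Inter>i\<in>I. tau F (\<zeta> i)) \<subseteq> tau F \<gamma>"
  shows "reachable (zero_class \<chi>) (\<Inter>i\<in>I. tau F (\<chi> \<inter> \<zeta> i)) \<subseteq> zero_class \<gamma>"
proof -
  define K L where "K = zero_class \<chi>" and "L = zero_class \<gamma>"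
  define A where "A = {x. \<forall>h\<in>gen_monoid F. h x \<in> L \<and> (\<forall>i\<in>I. h x \<in> zero_class (\<zeta> i) \<longrightarrow> h x \<in> K)}"
  have KL: "K \<subseteq> L"
    using \<eta> by (force simp: K_def L_def zero_class_def eta_def)
  have "c \<in> A" if "c \<in> reachable K (\<Inter>i\<in>I. tau F (\<chi> \<inter> \<zeta> i))" for c
    using that
  proof (induction rule: reachable.induct)
    case reachable_bot
    have "bot \<in> K" using congruence_refl[OF \<chi>] by (simp add: K_def zero_class_def)
    then show ?case using KL by (auto simp: A_def gen_monoid_bot[OF F])
  next
    case (reachable_sup c k)
    show ?case unfolding A_def mem_Collect_eq
    proof
      fix g assume g: "g \<in> gen_monoid F"
      have gk: "g k \<in> K"
        using zero_class_gen_monoid[OF F \<chi> g] reachable_sup.hyps(2) by (simp add: K_def)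
      have gc: "g c \<in> L" "\<forall>i\<in>I. g c \<in> zero_class (\<zeta> i) \<longrightarrow> g c \<in> K"
        using reachable_sup.IH g by (auto simp: A_def)
      have "sup (g c) (g k) \<in> L"
        using gc(1) gk KL zero_class_sup_iff[OF \<gamma>] by (auto simp: L_def)
      moreover have "sup (g c) (g k) \<in> K" if "i \<in> I" "sup (g c) (g k) \<in> zero_class (\<zeta> i)" for i
      proof -
        have "g c \<in> zero_class (\<zeta> i)" using that \<zeta> zero_class_sup_iff[of F "\<zeta> i"] by blast
        then show ?thesis using that(1) gc(2) gk zero_class_sup_iff[OF \<chi>] unfolding K_def by blast
      qed
      ultimately show "g (sup c k) \<in> L \<and> (\<forall>i\<in>I. g (sup c k) \<in> zero_class (\<zeta> i) \<longrightarrow> g (sup c k) \<in> K)"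
        by (simp add: gen_monoid_sup[OF F g])
    qed
  next
    case (reachable_step c d)
    show ?case unfolding A_def mem_Collect_eq
    proof
      fix g assume g: "g \<in> gen_monoid F"
      have "\<forall>h\<in>gen_monoid F. h (g c) \<in> zero_class \<gamma> \<and>
              (\<forall>i\<in>I. h (g c) \<in> zero_class (\<zeta> i) \<longrightarrow> h (g c) \<in> zero_class \<chi>)"
      proof
        fix h assume "h \<in> gen_monoid F"
        then have "h \<circ> g \<in> gen_monoid F" using gen_monoid_comp g by blast
        then show "h (g c) \<in> zero_class \<gamma> \<and>
              (\<forall>i\<in>I. h (g c) \<in> zero_class (\<zeta> i) \<longrightarrow> h (g c) \<in> zero_class \<chi>)"
          using reachable_step.IH unfolding A_def K_def L_def by (fastforce dest: bspec)
      qed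
      moreover have "(g c, g d) \<in> (\<Inter>i\<in>I. tau F (\<chi> \<inter> \<zeta> i))"
        using reachable_step.hyps(2) tau_gen_monoid[OF _ g] by blast
      ultimately show "g d \<in> L \<and> (\<forall>i\<in>I. g d \<in> zero_class (\<zeta> i) \<longrightarrow> g d \<in> K)"
        using tau_step_invariant[OF F \<zeta> \<tau> gen_monoid_mono[OF F g reachable_step.hyps(3)]]
        by (simp add: K_def L_def)
    qed
  qed
  then show ?thesis using gen_monoid.gen_id by (force simp: A_def K_def L_def)
qed

theorem theorem7p1:
  fixes F :: "('a::bounded_semilattice_sup_bot \<Rightarrow> 'a) set"
    and I :: "'i set"
    and \<chi> \<gamma> :: "'a rel"
    and \<zeta> :: "'i \<Rightarrow> 'a rel"
  assumes "sl_operators F"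
    and "congruence F \<chi>" and "congruence F \<gamma>"
    and "\<forall>i\<in>I. congruence F (\<zeta> i)"
    and "eta \<chi> \<subseteq> \<gamma>"
    and "(\<Inter>i\<in>I. tau F (\<zeta> i)) \<subseteq> tau F \<gamma>"
  shows "eta (con_join F (eta \<chi>) (\<Inter>i\<in>I. tau F (\<chi> \<inter> \<zeta> i))) \<subseteq> \<gamma>"
proof -
  note F = assms(1) and \<chi> = assms(2) and \<gamma> = assms(3)
  define T where "T = (\<Inter>i\<in>I. tau F (\<chi> \<inter> \<zeta> i))"
  define D where "D = below_reachable (zero_class \<chi>) T"
  have "sym T" unfolding T_def by (rule sym_INTER) (simp add: sym_tau)
  moreover have "(sup (g a) w, sup (g b) w) \<in> T" if "(a, b) \<in> T" "g \<in> gen_monoid F" for a b g w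
    using that tau_sup[OF F congruence_inter[OF \<chi>] tau_gen_monoid] assms(4) by (simp add: T_def)
  ultimately have "T \<subseteq> syntactic_con F D"
    unfolding D_def by (rule subset_syntactic_con_reachable)
  then have "con_join F (eta \<chi>) T \<subseteq> syntactic_con F D"
    using con_join_least[OF congruence_syntactic_con[OF F] eta_subset_syntactic_con[OF F \<chi>]]
    by (simp add: D_def)
  then have "zero_class (con_join F (eta \<chi>) T) \<subseteq> D"
    using zero_class_syntactic_con[of D F] reachable_bot unfolding D_def zero_class_def by blast
  also have "D \<subseteq> zero_class \<gamma>"
    using reachable_subset_zero_class[OF assms] zero_class_downward_closed[OF \<gamma>]
    unfolding D_def T_def by blast
  finally show ?thesis
    unfolding T_def by (rule eta_subset_of_zero_class_subset[OF \<gamma>])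
qed

end
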